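(* Let $n=3$ and let $M$ be a Griffiths positive $2\times 2$ matrix of constant coefficient $(1,1)$-forms on $\mathbb{C}^3$. Then $\Omega=\det(M)$ is a Lefschetz form for bidegree $(1,0)$, and $\Omega$ is a Hodge-Riemann form (with respect to any Kähler form $\omega$).
   Context: $V^{p,q}$ is the space of constant coefficient $(p,q)$-forms on $\mathbb{C}^n$; $V^{k,k}_{\mathbb{R}}$ is the set of real forms in $V^{k,k}$. A $(1,1)$-form is Kähler if it equals $\sum_l\frac{\sqrt{-1}}{2}dw_l\wedge d\overline{w_l}$ in some complex linear coordinates. A matrix $M=(\alpha_{i,j})$ of $(1,1)$-forms with $\alpha_{i,j}=\overline{\alpha_{j,i}}$ is Griffiths positive if $\sum_{i,j}\theta_i\alpha_{i,j}\overline{\theta_j}$ is Kähler for all nonzero $\theta$; $\det(M)=\alpha_{1,1}\wedge\alpha_{2,2}-\alpha_{1,2}\wedge\alpha_{2,1}$. $\Omega\in V^{k,k}$ is a Lefschetz form for bidegree $(p,q)$, $p+q=n-k$, if $\alpha\mapsto\alpha\wedge\Omega$ is an isomorphism $V^{p,q}\to V^{n-q,n-p}$. Given a Kähler form $\omega$, $\Omega\in V^{k,k}_{\mathbb{R}}$ is a Hodge-Riemann form if for every $(p,q)$ with $p,q\geqslant0$, $p+q=n-k$, there is a continuous path $\Omega_t\in V^{k,k}_{\mathbb{R}}$, $t\in[0,1]$, $\Omega_0=\Omega$, $\Omega_1=\omega^k$, with $\Omega_t\wedge\omega^{2r}$ a Lefschetz form for bidegree $(p-r,q-r)$ for all $0\leqslant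 r\leqslant\min\{p,q\}$, $t\in[0,1]$. *)

theory Defs
  imports Complex_Main
begin

text \<open>Generators of the exterior algebra are
  indexed by naturals: index j < n stands for dz_(j+1), index n + j (j < n) stands for
  dzbar_(j+1).  A form is given by its coefficients on the basis monomials e_S
  (wedge of the generators in S in increasing order), S a finite subset of {..<2n}.\<close>

type_synonym form = "nat set \<Rightarrow> complex"

definition V :: "nat \<Rightarrow> nat \<Rightarrow> nat \<Rightarrow> form set" where
  "V n p q = {f. \<forall>S. f S \<noteq> 0 \<longrightarrow>
      S \<subseteq> {..<2*n} \<and> card (S \<inter> {..<n}) = p \<and> card (S \<inter> {n..<2*n}) = q}"

definition wsign :: "nat set \<Rightarrow> nat set \<Rightarrow> complex" where
  "wsign A B = (-1) ^ card {(a, b). a \<in> A \<and> b \<in> B \<and> b < a}"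

definition wedge :: "form \<Rightarrow> form \<Rightarrow> form" where
  "wedge f g = (\<lambda>S. \<Sum>A\<in>Pow S. wsign A (S - A) * f A * g (S - A))"

definition unitf :: form where
  "unitf = (\<lambda>S. if S = {} then 1 else 0)"

primrec wpow :: "form \<Rightarrow> nat \<Rightarrow> form" where
  "wpow w 0 = unitf"
| "wpow w (Suc k) = wedge w (wpow w k)"

definition swapidx :: "nat \<Rightarrow> nat \<Rightarrow> nat" where
  "swapidx n i = (if i < n then i + n else if i < 2*n then i - n else i)"

text \<open>Complex conjugation: conj(a dz_I ^ dzbar_J) = cnj a dzbar_I ^ dz_J
  = (-1)^(|I||J|) cnj a dz_J ^ dzbar_I.\<close>
definition fconj :: "nat \<Rightarrow> form \<Rightarrow> form" where
  "fconj n f = (\<lambda>T. (-1) ^ (card (T \<inter> {..<n}) * card (T \<inter> {n..<2*n}))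
                        * cnj (f (swapidx n ` T)))"

definition VR :: "nat \<Rightarrow> nat \<Rightarrow> form set" where
  "VR n k = {f \<in> V n k k. fconj n f = f}"

definition holo1 :: "nat \<Rightarrow> (nat \<Rightarrow> complex) \<Rightarrow> form" where
  "holo1 n a = (\<lambda>S. if is_singleton S \<and> the_elem S < n then a (the_elem S) else 0)"

text \<open>Kaehler: omega = sum_l (i/2) dw_l ^ dwbar_l for complex linear coordinates
  w_l = sum_j A l j z_j with A an invertible n x n matrix.\<close>
definition Kahler :: "nat \<Rightarrow> form \<Rightarrow> bool" where
  "Kahler n w \<longleftrightarrow> (\<exists>A :: nat \<Rightarrow> nat \<Rightarrow> complex.
      (\<forall>c. (\<forall>j<n. (\<Sum>l<n. c l * A l j) = 0) \<longrightarrow> (\<forall>l<n. c l = 0)) \<and>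
      w = (\<lambda>S. \<Sum>l<n. (\<i> / 2) * wedge (holo1 n (A l)) (fconj n (holo1 n (A l))) S))"

definition GriffithsPos :: "nat \<Rightarrow> (nat \<Rightarrow> nat \<Rightarrow> form) \<Rightarrow> bool" where
  "GriffithsPos n M \<longleftrightarrow>
     (\<forall>i<2. \<forall>j<2. M i j \<in> V n 1 1 \<and> M i j = fconj n (M j i)) \<and>
     (\<forall>\<theta> :: nat \<Rightarrow> complex. (\<theta> 0 \<noteq> 0 \<or> \<theta> 1 \<noteq> 0) \<longrightarrow>
        Kahler n (\<lambda>S. \<Sum>i<2. \<Sum>j<2. \<theta> i * M i j S * cnj (\<theta> j)))"

definition det2 :: "(nat \<Rightarrow> nat \<Rightarrow> form) \<Rightarrow> form" where
  "det2 M = (\<lambda>S. wedge (M 0 0) (M 1 1) S - wedge (M 0 1) (M 1 0) S)"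

definition Lefschetz :: "nat \<Rightarrow> nat \<Rightarrow> nat \<Rightarrow> nat \<Rightarrow> form \<Rightarrow> bool" where
  "Lefschetz n k p q \<Omega> \<longleftrightarrow> \<Omega> \<in> V n k k \<and> p + q + k = n \<and>
     bij_betw (\<lambda>\<alpha>. wedge \<alpha> \<Omega>) (V n p q) (V n (n - q) (n - p))"

definition HodgeRiemann :: "nat \<Rightarrow> nat \<Rightarrow> form \<Rightarrow> form \<Rightarrow> bool" where
  "HodgeRiemann n k w \<Omega> \<longleftrightarrow> \<Omega> \<in> VR n k \<and>
     (\<forall>p q. p + q + k = n \<longrightarrow>
        (\<exists>\<gamma> :: real \<Rightarrow> form.
           (\<forall>S. continuous_on {0..1} (\<lambda>t. \<gamma> t S)) \<and>
           \<gamma> 0 = \<Omega> \<and> \<gamma> 1 = wpow w k \<and>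
           (\<forall>t\<in>{0..1}. \<gamma> t \<in> VR n k \<and>
              (\<forall>r \<le> min p q. Lefschetz n (k + 2*r) (p - r) (q - r) (wedge (\<gamma> t) (wpow w (2*r)))))))"

end

(* In the coordinates dz_1, dz_2, dz_3, dzbar_1, dzbar_2, dzbar_3 a (1,1)-form is a 3x3 matrix
   and so is a (2,2)-form, indexed by the omitted dz_j and dzbar_k.  If H_ij are the coefficient
   matrices of the entries of M, the coefficient matrix K of det(M) consists of mixed 2x2 minors,
   and wedging with det(M) acts on (1,0)- and (0,1)-forms through K (up to signs), so the
   Lefschetz property amounts to K being nondegenerate.  By Cauchy-Binet, the Hermitian form of K
   at the Pluecker vector of u1 ^ u2 is a mixed Gram determinant of the H_ij on u1, u2; after
   making u2 orthogonal to u1 for H_00, Griffiths positivity of the 2x2 matrices (H_ij(v, v))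
   together with a mixed discriminant inequality shows that it is positive.  Every vector of C^3
   is a Pluecker vector, so K is definite.  Hermitian symmetry and Griffiths positivity survive
   along the segment from (H_ij) to diag(P, P), where omega has coefficient matrix P, and there
   the determinant is omega^2; this segment witnesses the Hodge-Riemann property. *)

theory Submission
  imports Defs "Jordan_Normal_Form.Determinant"
begin

type_synonym mat3 = "nat \<Rightarrow> nat \<Rightarrow> complex"
type_synonym block = "nat \<Rightarrow> nat \<Rightarrow> mat3"

section \<open>Wedge products of basis forms\<close>

definition basis_form :: "nat set \<Rightarrow> form" where
  "basis_form T = (\<lambda>S. if S = T then 1 else 0)"

lemma wsign_eq_power_sum:
  assumes "finite A" "finite B"
  shows "wsign A B = (-1) ^ (\<Sum>a\<in>A. \<Sum>b\<in>B. if b < a then 1 else 0 :: nat)"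
proof -
  have "{(a, b). a \<in> A \<and> b \<in> B \<and> b < a} = Sigma A (\<lambda>a. {b\<in>B. b < a})" by auto
  then have "card {(a, b). a \<in> A \<and> b \<in> B \<and> b < a} = (\<Sum>a\<in>A. card {b\<in>B. b < a})"
    using assms by simp
  also have "\<dots> = (\<Sum>a\<in>A. \<Sum>b\<in>B. if b < a then 1 else 0 :: nat)"
    using assms by (simp add: sum.If_cases Int_def)
  finally show ?thesis unfolding wsign_def by simp
qed

lemma wedge_basis_form:
  "wedge (basis_form A) (basis_form B) =
     (\<lambda>S. if finite (A \<union> B) \<and> A \<inter> B = {} then wsign A B * basis_form (A \<union> B) S else 0)"
proof (rule ext)
  fix S
  show "wedge (basis_form A) (basis_form B) S =
    (if finite (A \<union> B) \<and> A \<inter> B = {} then wsign A B * basis_form (A \<union> B) S else 0)"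
  proof (cases "finite S")
    case False
    then show ?thesis by (auto simp: wedge_def basis_form_def)
  next
    case True
    have "wedge (basis_form A) (basis_form B) S
        = (\<Sum>X\<in>Pow S. if X = A then (if S - A = B then wsign A B else 0) else 0)"
      unfolding wedge_def basis_form_def by (rule sum.cong) auto
    also have "\<dots> = (if A \<subseteq> S \<and> S - A = B then wsign A B else 0)"
      using True by simp
    finally show ?thesis using True by (auto simp: basis_form_def)
  qed
qed

lemma wedge_sum_left: "wedge (\<lambda>S. \<Sum>i\<in>I. F i S) g = (\<lambda>S. \<Sum>i\<in>I. wedge (F i) g S)"
  unfolding wedge_def
  by (rule ext) (simp add: sum_distrib_left sum_distrib_right sum.swap[of _ I] algebra_simps)

lemma wedge_sum_right: "wedge f (\<lambda>S. \<Sum>i\<in>I. F i S) = (\<lambda>S. \<Sum>i\<in>I. wedge f (F i) S)"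
  unfolding wedge_def
  by (rule ext) (simp add: sum_distrib_left sum_distrib_right sum.swap[of _ I] algebra_simps)

lemma wedge_scale_left: "wedge (\<lambda>S. c * f S) g = (\<lambda>S. c * wedge f g S)"
  unfolding wedge_def by (rule ext) (simp add: sum_distrib_left algebra_simps)

lemma wedge_scale_right: "wedge f (\<lambda>S. c * g S) = (\<lambda>S. c * wedge f g S)"
  unfolding wedge_def by (rule ext) (simp add: sum_distrib_left algebra_simps)

lemmas wedge_linear = wedge_sum_left wedge_sum_right wedge_scale_left wedge_scale_right

lemma wedge_unitf_right:
  assumes "f \<in> V n p q"
  shows "wedge f unitf = f"
proof (rule ext)
  fix S
  show "wedge f unitf S = f S"
  proof (cases "finite S")
    case False
    then have "f S = 0"
      using assms finite_subset[of S "{..<2*n}"] by (auto simp: V_def)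
    then show ?thesis using False by (simp add: wedge_def)
  next
    case True
    have "wedge f unitf S = (\<Sum>X\<in>Pow S. if X = S then wsign S {} * f S else 0)"
      unfolding wedge_def unitf_def by (rule sum.cong) auto
    then show ?thesis using True by (simp add: wsign_def)
  qed
qed

lemma sum_basis_form_at:
  assumes "finite I" "inj_on T I" "i0 \<in> I"
  shows "(\<Sum>i\<in>I. c i * basis_form (T i) (T i0)) = c i0"
proof -
  have "(\<Sum>i\<in>I. c i * basis_form (T i) (T i0)) = (\<Sum>i\<in>I. if i = i0 then c i else 0)"
    using assms by (intro sum.cong) (auto simp: basis_form_def inj_on_def)
  then show ?thesis using assms by simp
qed

lemma form_eq_sum_basis_form:
  assumes "finite I" "inj_on T I" "\<And>S. f S \<noteq> 0 \<Longrightarrow> S \<in> T ` I"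
  shows "f = (\<lambda>S. \<Sum>i\<in>I. f (T i) * basis_form (T i) S)"
proof (rule ext)
  fix S
  show "f S = (\<Sum>i\<in>I. f (T i) * basis_form (T i) S)"
  proof (cases "S \<in> T ` I")
    case True
    then show ?thesis using sum_basis_form_at[OF assms(1,2)] by auto
  next
    case False
    then have "f S = 0" using assms(3) by blast
    moreover have "(\<Sum>i\<in>I. f (T i) * basis_form (T i) S) = 0"
      using False by (intro sum.neutral) (auto simp: basis_form_def)
    ultimately show ?thesis by simp
  qed
qed

lemma sum_basis_form_in_V:
  assumes "\<And>i. i \<in> I \<Longrightarrow>
    T i \<subseteq> {..<2*n} \<and> card (T i \<inter> {..<n}) = p \<and> card (T i \<inter> {n..<2*n}) = q"
  shows "(\<lambda>S. \<Sum>i\<in>I. c i * basis_form (T i) S) \<in> V n p q"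
  unfolding V_def
proof (intro CollectI allI impI)
  fix S assume "(\<Sum>i\<in>I. c i * basis_form (T i) S) \<noteq> 0"
  then obtain i where "i \<in> I" "c i * basis_form (T i) S \<noteq> 0" by (meson sum.neutral)
  then show "S \<subseteq> {..<2*n} \<and> card (S \<inter> {..<n}) = p \<and> card (S \<inter> {n..<2*n}) = q"
    using assms by (auto simp: basis_form_def split: if_splits)
qed

lemma swapidx_swapidx [simp]: "swapidx n (swapidx n i) = i"
  by (auto simp: swapidx_def)

lemma fconj_sum_basis_form:
  assumes "\<And>i. i \<in> I \<Longrightarrow>
    (-1::complex) ^ (card (swapidx n ` T i \<inter> {..<n}) * card (swapidx n ` T i \<inter> {n..<2*n})) = 1"
  shows "fconj n (\<lambda>S. \<Sum>i\<in>I. c i * basis_form (T i) S)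
       = (\<lambda>S. \<Sum>i\<in>I. cnj (c i) * basis_form (swapidx n ` T i) S)"
proof (rule ext)
  fix S
  have swap_eq: "(swapidx n ` S = T') \<longleftrightarrow> (S = swapidx n ` T')" for T'
    by (auto simp: image_image)
  have swap_basis: "basis_form (T i) (swapidx n ` S) = basis_form (swapidx n ` T i) S" for i
    by (simp add: basis_form_def swap_eq)
  have cnj_basis: "cnj (basis_form T' S) = basis_form T' S" for T'
    by (simp add: basis_form_def)
  have "fconj n (\<lambda>S. \<Sum>i\<in>I. c i * basis_form (T i) S) S =
      (-1) ^ (card (S \<inter> {..<n}) * card (S \<inter> {n..<2*n}))
        * (\<Sum>i\<in>I. cnj (c i) * basis_form (swapidx n ` T i) S)"
    unfolding fconj_def swap_basis by (simp add: cnj_basis)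
  also have "\<dots> = (\<Sum>i\<in>I. cnj (c i) * basis_form (swapidx n ` T i) S)"
  proof (cases "\<exists>i\<in>I. S = swapidx n ` T i")
    case True
    then show ?thesis using assms by auto
  next
    case False
    then have "(\<Sum>i\<in>I. cnj (c i) * basis_form (swapidx n ` T i) S) = 0"
      by (intro sum.neutral) (auto simp: basis_form_def)
    then show ?thesis by simp
  qed
  finally show "fconj n (\<lambda>S. \<Sum>i\<in>I. c i * basis_form (T i) S) S
      = (\<Sum>i\<in>I. cnj (c i) * basis_form (swapidx n ` T i) S)" .
qed

section \<open>Linear algebra on \<open>\<complex>\<^sup>3\<close>\<close>

lemma linear_system_solvable:
  fixes N :: "nat \<Rightarrow> nat \<Rightarrow> 'a::field"
  assumes inj: "\<And>c. \<forall>m<n. (\<Sum>j<n. N m j * c j) = 0 \<Longrightarrow> \<forall>j<n. c j = 0"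
  shows "\<exists>c. \<forall>m<n. (\<Sum>j<n. N m j * c j) = b m"
proof -
  define A where "A = mat n n (\<lambda>(i, j). N i j)"
  have A: "A \<in> carrier_mat n n" unfolding A_def by simp
  have mult_A: "(A *\<^sub>v v) $ m = (\<Sum>j<n. N m j * v $ j)" if "v \<in> carrier_vec n" "m < n" for v m
    using that unfolding A_def by (auto simp: scalar_prod_def lessThan_atLeast0 intro: sum.cong)
  have "det A \<noteq> 0"
  proof
    assume "det A = 0"
    then obtain v where v: "v \<in> carrier_vec n" "v \<noteq> 0\<^sub>v n" "A *\<^sub>v v = 0\<^sub>v n"
      using det_0_iff_vec_prod_zero_field[OF A] by blast
    have "\<forall>j<n. v $ j = 0"
      by (rule inj) (use v mult_A in \<open>metis index_zero_vec(1)\<close>)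
    then show False using v by (metis eq_vecI carrier_vecD index_zero_vec)
  qed
  \<comment> \<open>Cramer's rule: the adjugate inverts \<open>A\<close> up to the factor \<open>det A\<close>.\<close>
  define x where "x = (1 / det A) \<cdot>\<^sub>v (adj_mat A *\<^sub>v vec n b)"
  have x: "x \<in> carrier_vec n" unfolding x_def using adj_mat(1)[OF A] by simp
  have "A *\<^sub>v x = (1 / det A) \<cdot>\<^sub>v ((A * adj_mat A) *\<^sub>v vec n b)"
    unfolding x_def using A adj_mat(1)[OF A] by (simp add: mult_mat_vec)
  also have "\<dots> = vec n b"
    using \<open>det A \<noteq> 0\<close> by (auto simp: adj_mat(2)[OF A])
  finally have "\<forall>m<n. (\<Sum>j<n. N m j * x $ j) = b m"
    using mult_A[OF x] by (metis index_vec)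
  then show ?thesis by blast
qed

lemma less3_cases: "x < (3::nat) \<Longrightarrow> x = 0 \<or> x = 1 \<or> x = 2"
  by auto

lemma all_less_3: "(\<forall>j<(3::nat). P j) \<longleftrightarrow> P 0 \<and> P 1 \<and> P 2"
  using less3_cases by auto

lemma less_3_numerals: "(0::nat) < 3" "(1::nat) < 3" "(2::nat) < 3"
  by simp_all

lemma sum_lessThan_2: "(\<Sum>a<(2::nat). f a) = f 0 + f 1"
  by (simp add: numeral_2_eq_2)

lemma sum_lessThan_3: "(\<Sum>a<(3::nat). f a) = f 0 + f 1 + f 2"
proof -
  have "{..<(3::nat)} = {0, 1, 2}" by auto
  then show ?thesis by (simp add: add.assoc)
qed

definition sesq :: "mat3 \<Rightarrow> (nat \<Rightarrow> complex) \<Rightarrow> (nat \<Rightarrow> complex) \<Rightarrow> complex" where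
  "sesq X x y = (\<Sum>a<3. \<Sum>b<3. x a * X a b * cnj (y b))"

definition hermitian3 :: "mat3 \<Rightarrow> bool" where
  "hermitian3 X \<longleftrightarrow> (\<forall>a<3. \<forall>b<3. X a b = cnj (X b a))"

definition pos_def3 :: "mat3 \<Rightarrow> bool" where
  "pos_def3 X \<longleftrightarrow> (\<forall>v. (\<exists>a<3. v a \<noteq> 0) \<longrightarrow> 0 < Re (sesq X v v))"

lemma sesq_eq_sum_columns: "sesq X x y = (\<Sum>b<3. (\<Sum>a<3. x a * X a b) * cnj (y b))"
  unfolding sesq_def by (subst sum.swap) (simp add: sum_distrib_right)

lemma sesq_eq_sum_rows: "sesq X x y = (\<Sum>a<3. x a * (\<Sum>b<3. X a b * cnj (y b)))"
  unfolding sesq_def by (simp add: sum_distrib_left mult.assoc)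

lemma sesq_cong:
  assumes "\<And>a b. a < 3 \<Longrightarrow> b < 3 \<Longrightarrow> X a b = Y a b"
    and "\<And>a. a < 3 \<Longrightarrow> x a = x' a" and "\<And>b. b < 3 \<Longrightarrow> y b = y' b"
  shows "sesq X x y = sesq Y x' y'"
  unfolding sesq_def using assms by (intro sum.cong refl) auto

lemma sesq_scale: "sesq X (\<lambda>a. s * x a) (\<lambda>b. t * y b) = s * cnj t * sesq X x y"
  unfolding sesq_def by (simp add: sum_distrib_left algebra_simps)

lemma sesq_linear_left: "sesq X (\<lambda>a. s * x a - t * z a) y = s * sesq X x y - t * sesq X z y"
  unfolding sesq_def by (simp add: sum_subtractf sum_distrib_left algebra_simps)

lemma sesq_diff_matrix: "sesq (\<lambda>a b. X a b - Y a b) v w = sesq X v w - sesq Y v w"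
  unfolding sesq_def by (simp add: sum_subtractf algebra_simps)

lemma sesq_add_matrix:
  "sesq (\<lambda>a b. r * X a b + s * Y a b) v w = r * sesq X v w + s * sesq Y v w"
  unfolding sesq_def by (simp add: sum.distrib sum_distrib_left algebra_simps)

lemma sesq_conj_transpose:
  assumes "\<And>a b. a < 3 \<Longrightarrow> b < 3 \<Longrightarrow> X a b = cnj (Y b a)"
  shows "sesq X x y = cnj (sesq Y y x)"
proof -
  have "cnj (sesq Y y x) = (\<Sum>a<3. \<Sum>b<3. cnj (y b) * cnj (Y b a) * x a)"
    unfolding sesq_def by (subst sum.swap) simp
  also have "\<dots> = sesq X x y"
    unfolding sesq_def by (intro sum.cong refl) (simp add: assms mult_ac)
  finally show ?thesis by simp
qed

lemma Re_sum_mult_cnj_pos: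
  assumes "finite I" "i \<in> I" "w i \<noteq> 0"
  shows "0 < Re (\<Sum>l\<in>I. w l * cnj (w l))"
proof -
  have "Re (\<Sum>l\<in>I. w l * cnj (w l)) = (\<Sum>l\<in>I. (cmod (w l))\<^sup>2)"
    unfolding complex_norm_square[symmetric] Re_sum by simp
  also have "\<dots> > 0" using assms by (intro sum_pos2) auto
  finally show ?thesis .
qed

lemma pos_def3_convex:
  assumes "pos_def3 X" "pos_def3 Y" "0 \<le> t" "t \<le> 1"
  shows "pos_def3 (\<lambda>a b. (1 - of_real t) * X a b + of_real t * Y a b)"
  unfolding pos_def3_def
proof (intro allI impI)
  fix v :: "nat \<Rightarrow> complex" assume "\<exists>a<3. v a \<noteq> 0"
  then have "0 < Re (sesq X v v)" "0 < Re (sesq Y v v)" using assms(1,2) by (auto simp: pos_def3_def)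
  then have "0 < (1 - t) * Re (sesq X v v) + t * Re (sesq Y v v)"
    using assms(3,4) by (cases "t = 1") (auto intro: add_pos_nonneg)
  then show "0 < Re (sesq (\<lambda>a b. (1 - of_real t) * X a b + of_real t * Y a b) v v)"
    by (simp add: sesq_add_matrix)
qed

lemma pos_def3_scale:
  assumes "pos_def3 X" "0 < r"
  shows "pos_def3 (\<lambda>a b. of_real r * X a b)"
  using assms sesq_add_matrix[of "of_real r" X 0 X] by (auto simp: pos_def3_def)

lemma mixed_discriminant_gt:
  fixes a1 b1 a2 b2 :: real and c1 c2 :: complex
  assumes "0 < a1" "0 < b1" "0 < a2" "0 < b2" "(cmod c1)\<^sup>2 < a1 * b1" "(cmod c2)\<^sup>2 < a2 * b2"
  shows "2 * Re (c1 * cnj c2) < a1 * b2 + a2 * b1"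
proof -
  have "Re (c1 * cnj c2) \<le> cmod c1 * cmod c2"
    using complex_Re_le_cmod[of "c1 * cnj c2"] by (simp add: norm_mult)
  also have "\<dots> < sqrt (a1 * b1) * sqrt (a2 * b2)"
    using assms by (intro mult_strict_mono real_less_rsqrt) auto
  also have "\<dots> = sqrt ((a1 * b2) * (a2 * b1))"
    by (simp add: real_sqrt_mult[symmetric] mult_ac)
  also have "\<dots> \<le> (a1 * b2 + a2 * b1) / 2"
    using assms by (intro arith_geo_mean_sqrt) auto
  finally show ?thesis by simp
qed

section \<open>Coordinates for forms on \<open>\<complex>\<^sup>3\<close>\<close>

text \<open>For \<open>j < 3\<close>, \<open>lo3 j < hi3 j\<close> are the two elements of \<open>{0,1,2} - {j}\<close>. The basis
  monomial \<open>idx22 j k\<close> of bidegree (2,2) omits \<open>dz_j\<close> and \<open>dzbar_k\<close>; \<open>idx32 k\<close> omits only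
  \<open>dzbar_k\<close> and \<open>idx23 j\<close> only \<open>dz_j\<close>.\<close>

definition lo3 :: "nat \<Rightarrow> nat" where
  "lo3 j = (if j = 0 then 1 else 0)"

definition hi3 :: "nat \<Rightarrow> nat" where
  "hi3 j = (if j = 2 then 1 else 2)"

definition idx22 :: "nat \<Rightarrow> nat \<Rightarrow> nat set" where
  "idx22 j k = {lo3 j, hi3 j, 3 + lo3 k, 3 + hi3 k}"

definition idx32 :: "nat \<Rightarrow> nat set" where
  "idx32 k = {0, 1, 2, 3 + lo3 k, 3 + hi3 k}"

definition idx23 :: "nat \<Rightarrow> nat set" where
  "idx23 j = {lo3 j, hi3 j, 3, 4, 5}"

lemma inj_on_idx11: "inj_on (\<lambda>(a, b). {a, 3 + b :: nat}) ({..<3} \<times> {..<3})"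
  unfolding inj_on_def by (auto simp: doubleton_eq_iff)

lemma inj_on_idx32: "inj_on idx32 {..<3}"
proof -
  have "3 + k \<notin> idx32 k" "k \<noteq> k' \<Longrightarrow> 3 + k \<in> idx32 k'" if "k < 3" "k' < 3" for k k'
    using less3_cases[OF that(1)] less3_cases[OF that(2)] by (auto simp: idx32_def lo3_def hi3_def)
  then show ?thesis unfolding inj_on_def by (metis lessThan_iff)
qed

lemma inj_on_idx23: "inj_on idx23 {..<3}"
proof -
  have "j \<notin> idx23 j" "j \<noteq> j' \<Longrightarrow> j \<in> idx23 j'" if "j < 3" "j' < 3" for j j'
    using less3_cases[OF that(1)] less3_cases[OF that(2)] by (auto simp: idx23_def lo3_def hi3_def)
  then show ?thesis unfolding inj_on_def by (metis lessThan_iff)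
qed

lemma idx22_bidegree: "j < 3 \<Longrightarrow> k < 3 \<Longrightarrow>
  idx22 j k \<subseteq> {..<2*3} \<and> card (idx22 j k \<inter> {..<3}) = 2 \<and> card (idx22 j k \<inter> {3..<2*3}) = 2"
  by (elim less3_cases[elim_format] disjE) (simp_all add: idx22_def lo3_def hi3_def)

lemma idx32_bidegree: "k < 3 \<Longrightarrow>
  idx32 k \<subseteq> {..<2*3} \<and> card (idx32 k \<inter> {..<3}) = 3 \<and> card (idx32 k \<inter> {3..<2*3}) = 2"
  by (elim less3_cases[elim_format] disjE) (simp_all add: idx32_def lo3_def hi3_def)

lemma idx23_bidegree: "j < 3 \<Longrightarrow>
  idx23 j \<subseteq> {..<2*3} \<and> card (idx23 j \<inter> {..<3}) = 2 \<and> card (idx23 j \<inter> {3..<2*3}) = 3"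
  by (elim less3_cases[elim_format] disjE) (simp_all add: idx23_def lo3_def hi3_def)

text \<open>For distinct \<open>a, a' < 3\<close> the remaining index is \<open>3 - a - a'\<close>.\<close>

lemma wedge_basis_11:
  assumes "a < 3" "b < 3" "a' < 3" "b' < 3"
  shows "wedge (basis_form {a, 3+b}) (basis_form {a', 3+b'}) = (\<lambda>S. if a \<noteq> a' \<and> b \<noteq> b' then
     - ((if a' < a then -1 else 1) * (if b' < b then -1 else 1)) * basis_form (idx22 (3-a-a') (3-b-b')) S
     else 0)"
proof -
  have disj: "{a, 3+b} \<inter> {a', 3+b'} = {} \<longleftrightarrow> a \<noteq> a' \<and> b \<noteq> b'" using assms by auto
  have "{a, 3+b} \<union> {a', 3+b'} = idx22 (3-a-a') (3-b-b')
     \<and> wsign {a, 3+b} {a', 3+b'} = - ((if a' < a then -1 else 1) * (if b' < b then -1 else 1))"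
    if "a \<noteq> a'" "b \<noteq> b'"
    using less3_cases[OF assms(1)] less3_cases[OF assms(3)] less3_cases[OF assms(2)]
      less3_cases[OF assms(4)] that
    by (elim disjE) (simp_all add: idx22_def lo3_def hi3_def wsign_eq_power_sum insert_commute)
  then show ?thesis unfolding wedge_basis_form using disj by auto
qed

lemma wedge_basis_10_22:
  assumes "p < 3" "j < 3" "k < 3"
  shows "wedge (basis_form {p}) (basis_form (idx22 j k))
    = (\<lambda>S. if p = j then (-1)^j * basis_form (idx32 k) S else 0)"
proof -
  have "{p} \<inter> idx22 j k = {} \<longleftrightarrow> p = j" "{j} \<union> idx22 j k = idx32 k" "wsign {j} (idx22 j k) = (-1)^j"
    using less3_cases[OF assms(1)] less3_cases[OF assms(2)] less3_cases[OF assms(3)]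
    by (elim disjE; simp add: idx22_def idx32_def lo3_def hi3_def wsign_eq_power_sum insert_commute)+
  then show ?thesis unfolding wedge_basis_form by (auto simp: idx22_def)
qed

lemma wedge_basis_01_22:
  assumes "q < 3" "j < 3" "k < 3"
  shows "wedge (basis_form {3+q}) (basis_form (idx22 j k))
    = (\<lambda>S. if q = k then (-1)^k * basis_form (idx23 j) S else 0)"
proof -
  have "{3+q} \<inter> idx22 j k = {} \<longleftrightarrow> q = k" "{3+k} \<union> idx22 j k = idx23 j"
    "wsign {3+k} (idx22 j k) = (-1)^k"
    using less3_cases[OF assms(1)] less3_cases[OF assms(2)] less3_cases[OF assms(3)]
    by (elim disjE; simp add: idx22_def idx23_def lo3_def hi3_def wsign_eq_power_sum insert_commute)+
  then show ?thesis unfolding wedge_basis_form by (auto simp: idx22_def)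
qed

lemma wedge_basis_10_01:
  assumes "p < 3" "q < 3"
  shows "wedge (basis_form {p}) (basis_form {3+q}) = basis_form {p, 3+q}"
  using assms by (auto simp: wedge_basis_form wsign_eq_power_sum insert_commute)

definition comb3 :: "(nat \<Rightarrow> nat set) \<Rightarrow> (nat \<Rightarrow> complex) \<Rightarrow> form" where
  "comb3 T c = (\<lambda>S. \<Sum>p<3. c p * basis_form (T p) S)"

definition form11 :: "mat3 \<Rightarrow> form" where
  "form11 X = (\<lambda>S. \<Sum>a<3. \<Sum>b<3. (\<i>/2 * X a b) * basis_form {a, 3+b} S)"

definition coeff11 :: "form \<Rightarrow> mat3" where
  "coeff11 f a b = - 2 * \<i> * f {a, 3+b}"

definition form22 :: "mat3 \<Rightarrow> form" where
  "form22 K = (\<lambda>S. \<Sum>j<3. \<Sum>k<3. (K j k / 4) * basis_form (idx22 j k) S)"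

definition mixed_minor :: "mat3 \<Rightarrow> mat3 \<Rightarrow> mat3" where
  "mixed_minor X Y j k = X (lo3 j) (lo3 k) * Y (hi3 j) (hi3 k) + X (hi3 j) (hi3 k) * Y (lo3 j) (lo3 k)
     - X (lo3 j) (hi3 k) * Y (hi3 j) (lo3 k) - X (hi3 j) (lo3 k) * Y (lo3 j) (hi3 k)"

definition det_block :: "block \<Rightarrow> mat3" where
  "det_block H = (\<lambda>j k. mixed_minor (H 0 0) (H 1 1) j k - mixed_minor (H 0 1) (H 1 0) j k)"

lemma comb3_eq_iff:
  assumes "inj_on T {..<3}"
  shows "comb3 T c = comb3 T d \<longleftrightarrow> (\<forall>p<3. c p = d p)"
proof
  assume eq: "comb3 T c = comb3 T d"
  show "\<forall>p<3. c p = d p"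
  proof (intro allI impI)
    fix p :: nat assume "p < 3"
    then show "c p = d p"
      using fun_cong[OF eq, of "T p"] sum_basis_form_at[OF _ assms] by (simp add: comb3_def)
  qed
qed (simp add: comb3_def)

lemma range_comb3_eqI:
  assumes inj: "inj_on T {..<3}"
    and supp: "\<And>f S. f \<in> A \<Longrightarrow> f S \<noteq> 0 \<Longrightarrow> S \<in> T ` {..<3}"
    and comb: "\<And>c. comb3 T c \<in> A"
  shows "A = range (comb3 T)"
proof
  show "A \<subseteq> range (comb3 T)"
  proof
    fix f assume "f \<in> A"
    then have "f = comb3 T (\<lambda>p. f (T p))"
      unfolding comb3_def by (rule form_eq_sum_basis_form[OF finite_lessThan inj supp])
    then show "f \<in> range (comb3 T)" by blast
  qed
qed (use comb in blast)

lemma subset_card_Suc_eq_Diff: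
  assumes "L \<subseteq> A" "finite A" "Suc (card L) = card A"
  shows "\<exists>x\<in>A. L = A - {x}"
proof -
  have "L \<noteq> A" using assms(3) by auto
  then obtain x where x: "x \<in> A" "x \<notin> L" using assms(1) by blast
  then have "L \<subseteq> A - {x}" using assms(1) by auto
  moreover have "card (A - {x}) = card L" using assms x by simp
  ultimately have "L = A - {x}" using assms(2) by (metis card_subset_eq finite_Diff)
  then show ?thesis using x by blast
qed

lemma V3_support:
  assumes "f \<in> V 3 p q" "f S \<noteq> 0"
  obtains L H where "S = L \<union> H" "L \<subseteq> {0,1,2}" "H \<subseteq> {3,4,5}" "card L = p" "card H = q"
proof -
  have S: "S \<subseteq> {..<6}" "card (S \<inter> {..<3}) = p" "card (S \<inter> {3..<6}) = q"
    using assms unfolding V_def by auto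
  have "S = (S \<inter> {..<3}) \<union> (S \<inter> {3..<6})" using S(1) by auto
  moreover have "{..<3::nat} = {0,1,2}" "{3..<6::nat} = {3,4,5}" by auto
  ultimately show ?thesis using that S by (metis inf_le2)
qed

lemma V3_10_eq: "V 3 1 0 = range (comb3 (\<lambda>p. {p}))"
proof (rule range_comb3_eqI)
  fix f S assume "f \<in> V 3 1 0" "f S \<noteq> 0"
  then obtain L H where "S = L \<union> H" "L \<subseteq> {0,1,2}" "H \<subseteq> {3,4,5}" "card L = 1" "card H = 0"
    by (rule V3_support)
  then show "S \<in> (\<lambda>p. {p}) ` {..<3}"
    by (auto simp: card_1_singleton_iff finite_subset)
qed (auto simp: comb3_def intro!: sum_basis_form_in_V dest: less3_cases)

lemma V3_01_eq: "V 3 0 1 = range (comb3 (\<lambda>q. {3+q}))"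
proof (rule range_comb3_eqI)
  fix f S assume "f \<in> V 3 0 1" "f S \<noteq> 0"
  then obtain L H where "S = L \<union> H" "L \<subseteq> {0,1,2}" "H \<subseteq> {3,4,5}" "card L = 0" "card H = 1"
    by (rule V3_support)
  then obtain b where "S = {b}" "b \<in> {3,4,5}"
    by (auto simp: card_1_singleton_iff finite_subset)
  then show "S \<in> (\<lambda>q. {3+q}) ` {..<3}"
    by (auto intro: image_eqI[of _ _ "b - 3"])
qed (auto simp: comb3_def inj_on_def intro!: sum_basis_form_in_V dest: less3_cases)

lemma V3_32_eq: "V 3 3 2 = range (comb3 idx32)"
proof (rule range_comb3_eqI[OF inj_on_idx32])
  fix f S assume "f \<in> V 3 3 2" "f S \<noteq> 0"
  then obtain L H where S: "S = L \<union> H" "L \<subseteq> {0,1,2}" "H \<subseteq> {3,4,5}" "card L = 3" "card H = 2"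
    by (rule V3_support)
  have L: "L = {0,1,2}" using card_subset_eq[OF _ S(2)] S(4) by simp
  have "\<exists>x\<in>{3,4,5}. H = {3,4,5} - {x}"
    by (rule subset_card_Suc_eq_Diff) (use S in simp_all)
  then obtain x where x: "x \<in> {3,4,5}" "H = {3,4,5} - {x}" by blast
  then have "S = idx32 (x - 3)"
    unfolding S(1) L by (auto simp: idx32_def lo3_def hi3_def)
  then show "S \<in> idx32 ` {..<3}" using x(1) by auto
qed (unfold comb3_def, rule sum_basis_form_in_V, use idx32_bidegree in auto)

lemma V3_23_eq: "V 3 2 3 = range (comb3 idx23)"
proof (rule range_comb3_eqI[OF inj_on_idx23])
  fix f S assume "f \<in> V 3 2 3" "f S \<noteq> 0"
  then obtain L H where S: "S = L \<union> H" "L \<subseteq> {0,1,2}" "H \<subseteq> {3,4,5}" "card L = 2" "card H = 3"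
    by (rule V3_support)
  have H: "H = {3,4,5}" using card_subset_eq[OF _ S(3)] S(5) by simp
  have "\<exists>x\<in>{0,1,2}. L = {0,1,2} - {x}"
    by (rule subset_card_Suc_eq_Diff) (use S in simp_all)
  then obtain x where x: "x \<in> {0,1,2}" "L = {0,1,2} - {x}" by blast
  then have "S = idx23 x"
    unfolding S(1) H by (auto simp: idx23_def lo3_def hi3_def)
  then show "S \<in> idx23 ` {..<3}" using x(1) by auto
qed (unfold comb3_def, rule sum_basis_form_in_V, use idx23_bidegree in auto)

lemma form11_eq_sum_pairs: "form11 X = (\<lambda>S. \<Sum>i\<in>{..<3} \<times> {..<3}.
    (\<lambda>(a, b). \<i>/2 * X a b) i * basis_form ((\<lambda>(a, b). {a, 3 + b}) i) S)"
  unfolding form11_def by (simp add: sum.cartesian_product split_beta)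

lemma form22_eq_sum_pairs: "form22 K = (\<lambda>S. \<Sum>i\<in>{..<3} \<times> {..<3}.
    (\<lambda>(j, k). K j k / 4) i * basis_form ((\<lambda>(j, k). idx22 j k) i) S)"
  unfolding form22_def by (simp add: sum.cartesian_product split_beta)

lemma form11_in_V: "form11 X \<in> V 3 1 1"
  unfolding form11_eq_sum_pairs by (rule sum_basis_form_in_V) auto

lemma form22_in_V: "form22 K \<in> V 3 2 2"
  unfolding form22_eq_sum_pairs by (rule sum_basis_form_in_V) (use idx22_bidegree in auto)

lemma coeff11_form11:
  assumes "a < 3" "b < 3"
  shows "coeff11 (form11 X) a b = X a b"
proof -
  have "form11 X {a, 3 + b} = \<i>/2 * X a b"
    unfolding form11_eq_sum_pairs
    using sum_basis_form_at[OF _ inj_on_idx11, of "(a, b)" "\<lambda>(a, b). \<i>/2 * X a b"] assms by simp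
  then show ?thesis unfolding coeff11_def by (simp add: algebra_simps)
qed

lemma form11_coeff11:
  assumes "f \<in> V 3 1 1"
  shows "form11 (coeff11 f) = f"
proof -
  have "S \<in> (\<lambda>(a, b). {a, 3 + b}) ` ({..<3} \<times> {..<3})" if "f S \<noteq> 0" for S
  proof -
    obtain L H where S: "S = L \<union> H" "L \<subseteq> {0,1,2}" "H \<subseteq> {3,4,5}" "card L = 1" "card H = 1"
      using assms \<open>f S \<noteq> 0\<close> by (rule V3_support)
    then obtain a b where "L = {a}" "a \<in> {0,1,2}" "H = {b}" "b \<in> {3,4,5}"
      by (auto simp: card_1_singleton_iff)
    then show ?thesis
      unfolding S(1) by (intro image_eqI[of _ _ "(a, b - 3)"]) auto
  qed
  then have "f = (\<lambda>S. \<Sum>i\<in>{..<3} \<times> {..<3}.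
      f ((\<lambda>(a, b). {a, 3 + b}) i) * basis_form ((\<lambda>(a, b). {a, 3 + b}) i) S)"
    by (rule form_eq_sum_basis_form[OF finite_cartesian_product[OF finite_lessThan finite_lessThan]
          inj_on_idx11])
  then show ?thesis
    unfolding form11_eq_sum_pairs coeff11_def by (simp add: split_beta)
qed

lemma wedge_form11: "wedge (form11 X) (form11 Y) = form22 (mixed_minor X Y)"
  unfolding form11_def form22_def
  by (simp only: wedge_linear, simp only: sum_lessThan_3 wedge_basis_11 less_3_numerals)
    (rule ext, simp add: mixed_minor_def lo3_def hi3_def field_simps)

lemma det2_form11: "det2 (\<lambda>i j. form11 (H i j)) = form22 (det_block H)"
  unfolding det2_def wedge_form11 form22_def det_block_def
  by (rule ext) (simp add: sum_subtractf[symmetric] algebra_simps diff_divide_distrib)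

lemma wedge_comb3_10_01:
  "wedge (comb3 (\<lambda>p. {p}) x) (comb3 (\<lambda>q. {3+q}) y) = form11 (\<lambda>p q. - 2 * \<i> * x p * y q)"
  unfolding comb3_def form11_def
  by (simp only: wedge_linear, simp only: sum_lessThan_3 wedge_basis_10_01 less_3_numerals)
    (rule ext, simp add: field_simps)

lemma wedge_comb3_10_22:
  "wedge (comb3 (\<lambda>p. {p}) c) (form22 K) = comb3 idx32 (\<lambda>k. \<Sum>j<3. ((-1)^j * K j k / 4) * c j)"
  unfolding comb3_def form22_def
  by (simp only: wedge_linear, simp only: sum_lessThan_3 wedge_basis_10_22 less_3_numerals)
    (rule ext, simp add: field_simps)

lemma wedge_comb3_01_22:
  "wedge (comb3 (\<lambda>q. {3+q}) c) (form22 K) = comb3 idx23 (\<lambda>j. \<Sum>k<3. ((-1)^k * K j k / 4) * c k)"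
  unfolding comb3_def form22_def
  by (simp only: wedge_linear, simp only: sum_lessThan_3 wedge_basis_01_22 less_3_numerals)
    (rule ext, simp add: field_simps)

section \<open>Lefschetz forms of bidegree (2,2)\<close>

lemma bij_betw_comb3:
  assumes T: "inj_on T {..<3}" and T': "inj_on T' {..<3}"
    and f: "\<And>c. f (comb3 T c) = comb3 T' (\<lambda>m. \<Sum>j<3. N m j * c j)"
    and nondeg: "\<And>c. \<forall>m<3. (\<Sum>j<3. N m j * c j) = 0 \<Longrightarrow> \<forall>j<3. c j = 0"
  shows "bij_betw f (range (comb3 T)) (range (comb3 T'))"
proof (rule bij_betw_imageI)
  show "inj_on f (range (comb3 T))"
  proof (rule inj_onI, clarsimp)
    fix c d assume "f (comb3 T c) = f (comb3 T d)"
    then have "\<forall>m<3. (\<Sum>j<3. N m j * c j) = (\<Sum>j<3. N m j * d j)"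
      unfolding f comb3_eq_iff[OF T'] .
    then have "\<forall>m<3. (\<Sum>j<3. N m j * (c j - d j)) = 0"
      by (simp add: right_diff_distrib sum_subtractf)
    then have "\<forall>j<3. c j = d j" using nondeg[of "\<lambda>j. c j - d j"] by simp
    then show "comb3 T c = comb3 T d" unfolding comb3_eq_iff[OF T] .
  qed
  show "f ` range (comb3 T) = range (comb3 T')"
  proof
    show "f ` range (comb3 T) \<subseteq> range (comb3 T')" using f by auto
    show "range (comb3 T') \<subseteq> f ` range (comb3 T)"
    proof clarify
      fix b
      obtain c where "\<forall>m<3. (\<Sum>j<3. N m j * c j) = b m"
        using linear_system_solvable[OF nondeg] by blast
      then have "comb3 T' b = f (comb3 T c)" unfolding f comb3_eq_iff[OF T'] by simp
      then show "comb3 T' b \<in> f ` range (comb3 T)" by blast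
    qed
  qed
qed

lemma Lefschetz_form22_10:
  assumes definite: "\<And>c. sesq K c c = 0 \<Longrightarrow> \<forall>j<3. c j = 0"
  shows "Lefschetz 3 2 1 0 (form22 K)"
proof -
  have nondeg: "\<forall>j<3. c j = 0" if "\<forall>m<3. (\<Sum>j<3. ((-1)^j * K j m / 4) * c j) = 0" for c
  proof -
    define c' where "c' j = (-1)^j * c j / 4" for j
    have "(\<Sum>j<3. c' j * K j m) = (\<Sum>j<3. ((-1)^j * K j m / 4) * c j)" for m
      unfolding c'_def by (simp add: mult_ac)
    then have "sesq K c' c' = 0" using that by (simp add: sesq_eq_sum_columns)
    then have "\<forall>j<3. c' j = 0" by (rule definite)
    then show ?thesis unfolding c'_def by simp
  qed
  have "bij_betw (\<lambda>\<alpha>. wedge \<alpha> (form22 K)) (range (comb3 (\<lambda>p. {p}))) (range (comb3 idx32))"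
    by (rule bij_betw_comb3[OF _ inj_on_idx32 wedge_comb3_10_22 nondeg]) simp
  then show ?thesis
    unfolding Lefschetz_def V3_10_eq [symmetric] using form22_in_V V3_32_eq by simp
qed

lemma Lefschetz_form22_01:
  assumes definite: "\<And>c. sesq K c c = 0 \<Longrightarrow> \<forall>j<3. c j = 0"
  shows "Lefschetz 3 2 0 1 (form22 K)"
proof -
  have nondeg: "\<forall>k<3. c k = 0" if "\<forall>m<3. (\<Sum>k<3. ((-1)^k * K m k / 4) * c k) = 0" for c
  proof -
    define c' where "c' k = cnj ((-1)^k * c k / 4)" for k
    have "(\<Sum>k<3. K m k * cnj (c' k)) = (\<Sum>k<3. ((-1)^k * K m k / 4) * c k)" for m
      unfolding c'_def by (simp add: mult_ac)
    then have "sesq K c' c' = 0" using that by (simp add: sesq_eq_sum_rows)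
    then have "\<forall>k<3. c' k = 0" by (rule definite)
    then show ?thesis unfolding c'_def by simp
  qed
  have "bij_betw (\<lambda>\<alpha>. wedge \<alpha> (form22 K)) (range (comb3 (\<lambda>q. {3+q}))) (range (comb3 idx23))"
    by (rule bij_betw_comb3[OF _ inj_on_idx23 wedge_comb3_01_22 nondeg]) (simp_all add: inj_on_def)
  then show ?thesis
    unfolding Lefschetz_def V3_01_eq [symmetric] using form22_in_V V3_23_eq by simp
qed

lemma fconj_form22: "fconj 3 (form22 K) = form22 (\<lambda>j k. cnj (K k j))"
proof -
  have swap: "swapidx 3 ` idx22 j k = idx22 k j" if "j < 3" "k < 3" for j k
    using less3_cases[OF that(1)] less3_cases[OF that(2)]
    by (auto simp: idx22_def lo3_def hi3_def swapidx_def)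
  have sign: "(-1::complex) ^ (card (idx22 k j \<inter> {..<3}) * card (idx22 k j \<inter> {3..<6})) = 1"
    if "j < 3" "k < 3" for j k
    using idx22_bidegree[OF that(2,1)] by simp
  have "fconj 3 (form22 K) = (\<lambda>S. \<Sum>i\<in>{..<3} \<times> {..<3}.
      cnj ((\<lambda>(j, k). K j k / 4) i) * basis_form (swapidx 3 ` (\<lambda>(j, k). idx22 j k) i) S)"
    unfolding form22_eq_sum_pairs
    by (rule fconj_sum_basis_form) (auto simp: swap sign)
  also have "\<dots> = (\<lambda>S. \<Sum>i\<in>{..<3} \<times> {..<3}.
      cnj ((\<lambda>(j, k). K j k / 4) i) * basis_form ((\<lambda>(j, k). idx22 k j) i) S)"
    by (intro ext sum.cong refl) (auto simp: swap)
  also have "\<dots> = (\<lambda>S. \<Sum>j<3. \<Sum>k<3. cnj (K j k / 4) * basis_form (idx22 k j) S)"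
    by (simp add: sum.cartesian_product split_beta)
  also have "\<dots> = form22 (\<lambda>j k. cnj (K k j))"
    unfolding form22_def by (rule ext) (subst sum.swap, simp)
  finally show ?thesis .
qed

lemma VR_form22:
  assumes "hermitian3 K"
  shows "form22 K \<in> VR 3 2"
proof -
  have "form22 (\<lambda>j k. cnj (K k j)) = form22 K"
    unfolding form22_def using assms
    by (intro ext sum.cong refl) (metis hermitian3_def lessThan_iff)
  then show ?thesis unfolding VR_def using form22_in_V fconj_form22 by simp
qed

section \<open>Kaehler forms and Griffiths positivity in coordinates\<close>

lemma holo1_eq_comb3: "holo1 3 a = comb3 (\<lambda>p. {p}) a"
proof (rule ext)
  fix S
  show "holo1 3 a S = comb3 (\<lambda>p. {p}) a S"
  proof (cases "is_singleton S \<and> the_elem S < 3")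
    case True
    then obtain x where x: "S = {x}" "x < 3" by (auto elim!: is_singletonE)
    then show ?thesis
      using sum_basis_form_at[of "{..<3}" "\<lambda>p. {p}" x a] by (simp add: holo1_def comb3_def)
  next
    case False
    then have "comb3 (\<lambda>p. {p}) a S = 0"
      unfolding comb3_def by (intro sum.neutral) (auto simp: basis_form_def)
    then show ?thesis using False by (auto simp: holo1_def)
  qed
qed

lemma fconj_comb3_10: "fconj 3 (comb3 (\<lambda>p. {p}) a) = comb3 (\<lambda>q. {3+q}) (\<lambda>q. cnj (a q))"
proof -
  have "swapidx 3 ` {p} = {3+p}" if "p < 3" for p
    using that by (simp add: swapidx_def)
  then show ?thesis
    unfolding comb3_def by (subst fconj_sum_basis_form) auto
qed

lemma Kahler3_form11:
  assumes "Kahler 3 w"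
  obtains P where "w = form11 P" "hermitian3 P" "pos_def3 P"
proof -
  obtain A :: "nat \<Rightarrow> nat \<Rightarrow> complex" where
    A: "\<And>c. \<forall>j<3. (\<Sum>l<3. c l * A l j) = 0 \<Longrightarrow> \<forall>l<3. c l = 0" and
    wA: "w = (\<lambda>S. \<Sum>l<3. (\<i> / 2) * wedge (holo1 3 (A l)) (fconj 3 (holo1 3 (A l))) S)"
    using assms unfolding Kahler_def by blast
  define P where "P a b = (\<Sum>l<3. A l a * cnj (A l b))" for a b
  have "w = form11 P"
    unfolding wA holo1_eq_comb3 fconj_comb3_10 wedge_comb3_10_01 form11_def P_def
    by (rule ext) (simp add: sum_lessThan_3 field_simps)
  moreover have "hermitian3 P"
    unfolding hermitian3_def P_def by (simp add: mult.commute)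
  moreover have "pos_def3 P"
    unfolding pos_def3_def
  proof (intro allI impI)
    fix v :: "nat \<Rightarrow> complex" assume "\<exists>a<3. v a \<noteq> 0"
    then obtain a where a: "a < 3" "v a \<noteq> 0" by blast
    define u where "u l = (\<Sum>a<3. A l a * v a)" for l
    have "\<exists>l<3. u l \<noteq> 0"
    proof (rule ccontr)
      assume "\<not> (\<exists>l<3. u l \<noteq> 0)"
      then have u: "\<forall>l<3. u l = 0" by simp
      \<comment> \<open>\<open>A\<close> is invertible, so \<open>cnj \<circ> v\<close> is a combination of its rows.\<close>
      have "\<exists>c. \<forall>m<3. (\<Sum>j<3. A j m * c j) = cnj (v m)"
      proof (rule linear_system_solvable)
        fix c assume "\<forall>m<3. (\<Sum>j<3. A j m * c j) = 0"
        then have "\<forall>j<3. (\<Sum>l<3. c l * A l j) = 0" by (simp add: mult.commute)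
        then show "\<forall>j<3. c j = 0" by (rule A)
      qed
      then obtain c where c: "\<forall>m<3. (\<Sum>j<3. A j m * c j) = cnj (v m)" by blast
      have "(\<Sum>m<3. v m * cnj (v m)) = (\<Sum>m<3. v m * (\<Sum>j<3. A j m * c j))"
        using c by simp
      also have "\<dots> = (\<Sum>j<3. c j * u j)"
        unfolding u_def sum_distrib_left by (subst sum.swap) (simp add: mult_ac)
      also have "\<dots> = 0" using u by simp
      finally show False using Re_sum_mult_cnj_pos[of "{..<3}" a v] a by simp
    qed
    then obtain l where "l < 3" "u l \<noteq> 0" by blast
    moreover have "sesq P v v = (\<Sum>l<3. u l * cnj (u l))"
      unfolding sesq_def P_def u_def by (simp add: sum_lessThan_3 algebra_simps)
    ultimately show "0 < Re (sesq P v v)" using Re_sum_mult_cnj_pos[of "{..<3}" l u] by simp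
  qed
  ultimately show ?thesis using that by blast
qed

definition block_hermitian :: "block \<Rightarrow> bool" where
  "block_hermitian H \<longleftrightarrow> (\<forall>i<2. \<forall>j<2. \<forall>a<3. \<forall>b<3. H i j a b = cnj (H j i b a))"

definition griffiths_pos :: "block \<Rightarrow> bool" where
  "griffiths_pos H \<longleftrightarrow> (\<forall>\<theta>. (\<theta> 0 \<noteq> 0 \<or> \<theta> 1 \<noteq> 0) \<longrightarrow>
     pos_def3 (\<lambda>a b. \<Sum>i<2. \<Sum>j<2. \<theta> i * cnj (\<theta> j) * H i j a b))"

lemma block_hermitianD:
  "block_hermitian H \<Longrightarrow> i < 2 \<Longrightarrow> j < 2 \<Longrightarrow> a < 3 \<Longrightarrow> b < 3 \<Longrightarrow> H i j a b = cnj (H j i b a)"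
  unfolding block_hermitian_def by blast

lemma sesq_block_comb:
  fixes \<theta> :: "nat \<Rightarrow> complex"
  shows "sesq (\<lambda>a b. \<Sum>i<2. \<Sum>j<2. \<theta> i * cnj (\<theta> j) * H i j a b) v w
     = (\<Sum>i<2. \<Sum>j<2. \<theta> i * cnj (\<theta> j) * sesq (H i j) v w)"
  unfolding sum_lessThan_2 sesq_def by (simp add: sum.distrib sum_distrib_left algebra_simps)

lemma GriffithsPos_coeffs:
  assumes "GriffithsPos 3 M"
  defines "H \<equiv> \<lambda>i j. coeff11 (M i j)"
  shows "det2 M = form22 (det_block H)" and "block_hermitian H" and "griffiths_pos H"
proof -
  have "\<forall>i<2. \<forall>j<2. M i j \<in> V 3 1 1 \<and> M i j = fconj 3 (M j i)"
    using assms(1) unfolding GriffithsPos_def by (rule conjunct1)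
  then have M: "M i j \<in> V 3 1 1" "M i j = fconj 3 (M j i)" if "i < 2" "j < 2" for i j
    using that by (meson lessThan_iff)+
  have "det2 M = det2 (\<lambda>i j. form11 (H i j))"
    unfolding det2_def H_def using form11_coeff11[OF M(1)] by simp
  then show "det2 M = form22 (det_block H)" by (simp add: det2_form11)
  show "block_hermitian H"
    unfolding block_hermitian_def
  proof (intro allI impI)
    fix i j a b :: nat assume ij: "i < 2" "j < 2" and ab: "a < 3" "b < 3"
    have "swapidx 3 ` {a, 3+b} = {b, 3+a}" "{a, 3+b} \<inter> {..<3} = {a}" "{a, 3+b} \<inter> {3..<2*3} = {3+b}"
      using ab by (auto simp: swapidx_def)
    then have "M i j {a, 3+b} = - cnj (M j i {b, 3+a})"
      by (subst M(2)[OF ij]) (simp add: fconj_def)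
    then show "H i j a b = cnj (H j i b a)" unfolding H_def coeff11_def by simp
  qed
  show "griffiths_pos H"
    unfolding griffiths_pos_def
  proof (intro allI impI)
    fix \<theta> :: "nat \<Rightarrow> complex" assume "\<theta> 0 \<noteq> 0 \<or> \<theta> 1 \<noteq> 0"
    then have "Kahler 3 (\<lambda>S. \<Sum>i<2. \<Sum>j<2. \<theta> i * M i j S * cnj (\<theta> j))"
      using assms(1) unfolding GriffithsPos_def by blast
    then obtain P where P: "(\<lambda>S. \<Sum>i<2. \<Sum>j<2. \<theta> i * M i j S * cnj (\<theta> j)) = form11 P" "pos_def3 P"
      by (rule Kahler3_form11)
    have "(\<Sum>i<2. \<Sum>j<2. \<theta> i * cnj (\<theta> j) * H i j a b) = P a b" if "a < 3" "b < 3" for a b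
      using coeff11_form11[OF that, of P, folded P(1)]
      unfolding H_def coeff11_def by (simp add: sum_lessThan_2 algebra_simps)
    then have "sesq (\<lambda>a b. \<Sum>i<2. \<Sum>j<2. \<theta> i * cnj (\<theta> j) * H i j a b) v v = sesq P v v" for v
      by (rule sesq_cong) simp_all
    then show "pos_def3 (\<lambda>a b. \<Sum>i<2. \<Sum>j<2. \<theta> i * cnj (\<theta> j) * H i j a b)"
      using P(2) unfolding pos_def3_def by simp
  qed
qed

lemma griffiths_pos_gram:
  assumes H: "block_hermitian H" "griffiths_pos H" and v: "\<exists>a<3. v a \<noteq> 0"
  defines "m \<equiv> \<lambda>i j. sesq (H i j) v v"
  shows "Im (m 0 0) = 0" "Im (m 1 1) = 0" "m 1 0 = cnj (m 0 1)"
    "0 < Re (m 0 0)" "0 < Re (m 1 1)" "(cmod (m 0 1))\<^sup>2 < Re (m 0 0) * Re (m 1 1)"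
proof -
  have mh: "m i j = cnj (m j i)" if "i < 2" "j < 2" for i j
    unfolding m_def by (rule sesq_conj_transpose) (rule block_hermitianD[OF H(1) that])
  show i0: "Im (m 0 0) = 0" using arg_cong[OF mh[of 0 0], of Im] by simp
  show i1: "Im (m 1 1) = 0" using arg_cong[OF mh[of 1 1], of Im] by simp
  show m10: "m 1 0 = cnj (m 0 1)" using mh[of 1 0] by simp
  have pos: "0 < Re (\<Sum>i<2. \<Sum>j<2. \<theta> i * cnj (\<theta> j) * m i j)" if "\<theta> 0 \<noteq> 0 \<or> \<theta> 1 \<noteq> 0" for \<theta>
    using H(2) that v unfolding griffiths_pos_def pos_def3_def m_def sesq_block_comb by blast
  show r0: "0 < Re (m 0 0)" using pos[of "\<lambda>i. if i = 0 then 1 else 0"] by (simp add: sum_lessThan_2)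
  show r1: "0 < Re (m 1 1)" using pos[of "\<lambda>i. if i = 0 then 0 else 1"] by (simp add: sum_lessThan_2)
  \<comment> \<open>Test against \<open>\<theta> = (Re (m 1 1), - m 0 1)\<close>: this is the determinant of \<open>m\<close> times \<open>Re (m 1 1)\<close>.\<close>
  define r where "r = Re (m 1 1)"
  have "0 < Re (\<Sum>i<2. \<Sum>j<2. (\<lambda>i. if i = 0 then of_real r else - m 0 1) i
      * cnj ((\<lambda>i. if i = 0 then of_real r else - m 0 1) j) * m i j)"
    using r1 unfolding r_def by (intro pos) simp
  also have "\<dots> = r * (r * Re (m 0 0) - (cmod (m 0 1))\<^sup>2)"
    using i0 i1 m10 unfolding sum_lessThan_2 r_def cmod_power2
    by (simp add: algebra_simps power2_eq_square)
  finally show "(cmod (m 0 1))\<^sup>2 < Re (m 0 0) * Re (m 1 1)"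
    using r1 unfolding r_def by (simp add: zero_less_mult_iff mult.commute)
qed

lemma mixed_minor_cong:
  assumes "\<And>a b. a < 3 \<Longrightarrow> b < 3 \<Longrightarrow> X a b = X' a b" "\<And>a b. a < 3 \<Longrightarrow> b < 3 \<Longrightarrow> Y a b = Y' a b"
  shows "mixed_minor X Y j k = mixed_minor X' Y' j k"
  using assms by (simp add: mixed_minor_def lo3_def hi3_def)

lemma mixed_minor_commute: "mixed_minor X Y = mixed_minor Y X"
  by (intro ext) (simp add: mixed_minor_def algebra_simps)

lemma cnj_mixed_minor:
  "cnj (mixed_minor X Y k j) = mixed_minor (\<lambda>a b. cnj (X b a)) (\<lambda>a b. cnj (Y b a)) j k"
  by (simp add: mixed_minor_def)

lemma hermitian3_det_block:
  assumes "block_hermitian H"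
  shows "hermitian3 (det_block H)"
  unfolding hermitian3_def
proof (intro allI impI)
  fix j k :: nat
  have H: "cnj (H j i b a) = H i j a b" if "i < 2" "j < 2" "a < 3" "b < 3" for i j a b
    using block_hermitianD[OF assms that] by simp
  have "cnj (det_block H k j) = mixed_minor (H 0 0) (H 1 1) j k - mixed_minor (H 1 0) (H 0 1) j k"
    unfolding det_block_def complex_cnj_diff cnj_mixed_minor
    by (intro arg_cong2[where f = minus] mixed_minor_cong) (simp_all only: H less_3_numerals)
  then show "det_block H j k = cnj (det_block H k j)"
    unfolding det_block_def mixed_minor_commute[of "H 1 0"] by simp
qed

section \<open>Definiteness of the determinant form\<close>

definition pluecker :: "(nat \<Rightarrow> complex) \<Rightarrow> (nat \<Rightarrow> complex) \<Rightarrow> nat \<Rightarrow> complex" where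
  "pluecker u1 u2 j = u1 (lo3 j) * u2 (hi3 j) - u1 (hi3 j) * u2 (lo3 j)"

definition mixed_gram :: "mat3 \<Rightarrow> mat3 \<Rightarrow> (nat \<Rightarrow> complex) \<Rightarrow> (nat \<Rightarrow> complex) \<Rightarrow> complex" where
  "mixed_gram X Y u1 u2 = sesq X u1 u1 * sesq Y u2 u2 + sesq X u2 u2 * sesq Y u1 u1
     - sesq X u1 u2 * sesq Y u2 u1 - sesq X u2 u1 * sesq Y u1 u2"

text \<open>Cauchy--Binet for mixed minors.\<close>

lemma sesq_mixed_minor_pluecker:
  "sesq (mixed_minor X Y) (pluecker u1 u2) (pluecker u1 u2) = mixed_gram X Y u1 u2"
proof -
  define \<mu> where "\<mu> a a' = u1 a * u2 a' - u2 a * u1 a'" for a a'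
  have sesq_mult: "sesq X x y * sesq Y x' y' =
      (\<Sum>a<3. \<Sum>a'<3. \<Sum>b<3. \<Sum>b'<3. X a b * Y a' b' * (x a * x' a') * (cnj (y b) * cnj (y' b')))"
    for x y x' y'
    unfolding sesq_def sum_product by (simp add: algebra_simps)
  have expand: "mixed_gram X Y u1 u2 =
      (\<Sum>a<3. \<Sum>a'<3. \<Sum>b<3. \<Sum>b'<3. X a b * Y a' b' * \<mu> a a' * cnj (\<mu> b b'))"
    unfolding mixed_gram_def sesq_mult \<mu>_def
    by (simp add: sum_subtractf[symmetric] sum.distrib[symmetric] algebra_simps)
  have pl: "pluecker u1 u2 j = \<mu> (lo3 j) (hi3 j)" for j
    by (simp add: \<mu>_def pluecker_def mult.commute)
  have \<mu>: "\<mu> a a = 0" "\<mu> 1 0 = - \<mu> 0 1" "\<mu> 2 0 = - \<mu> 0 2" "\<mu> 2 1 = - \<mu> 1 2" for a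
    by (simp_all add: \<mu>_def)
  show ?thesis
    unfolding expand sesq_def pl
    by (simp only: sum_lessThan_3 mixed_minor_def lo3_def hi3_def \<mu>) (simp add: algebra_simps)
qed

lemma pluecker_nonzero:
  assumes "\<exists>j<3. pluecker u1 u2 j \<noteq> 0"
  shows "\<exists>a<3. u1 a \<noteq> 0" "\<exists>a<3. u2 a \<noteq> 0"
proof -
  have "lo3 j < 3" "hi3 j < 3" for j by (simp_all add: lo3_def hi3_def)
  then have "pluecker u1 u2 j = 0" if "(\<forall>a<3. u1 a = 0) \<or> (\<forall>a<3. u2 a = 0)" for j
    using that unfolding pluecker_def by auto
  then show "\<exists>a<3. u1 a \<noteq> 0" "\<exists>a<3. u2 a \<noteq> 0" using assms by blast+
qed

lemma pluecker_shear: "pluecker u1 (\<lambda>b. s * u2 b - t * u1 b) = (\<lambda>j. s * pluecker u1 u2 j)"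
  unfolding pluecker_def by (rule ext) (simp add: algebra_simps)

lemma pluecker_onto:
  assumes "\<exists>j<3. c j \<noteq> 0"
  obtains u1 u2 l where "l \<noteq> 0" "\<forall>j<3. pluecker u1 u2 j = l * c j"
proof -
  from assms consider "c 0 \<noteq> 0" | "c 1 \<noteq> 0" | "c 2 \<noteq> 0"
    using less3_cases by blast
  then show ?thesis
  proof cases
    case 1
    have pl: "\<forall>j<3. pluecker ((!) [c 1 / c 0, 1, 0]) ((!) [- c 2 / c 0, 0, 1]) j = (1 / c 0) * c j"
      unfolding all_less_3 pluecker_def lo3_def hi3_def using 1 by (simp add: field_simps)
    then show ?thesis using that[OF _ pl] 1 by simp
  next
    case 2
    have pl: "\<forall>j<3. pluecker ((!) [1, c 0 / c 1, 0]) ((!) [0, c 2 / c 1, 1]) j = (1 / c 1) * c j"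
      unfolding all_less_3 pluecker_def lo3_def hi3_def using 2 by (simp add: field_simps)
    then show ?thesis using that[OF _ pl] 2 by simp
  next
    case 3
    have pl: "\<forall>j<3. pluecker ((!) [1, 0, - c 0 / c 2]) ((!) [0, 1, c 1 / c 2]) j = (1 / c 2) * c j"
      unfolding all_less_3 pluecker_def lo3_def hi3_def using 3 by (simp add: field_simps)
    then show ?thesis using that[OF _ pl] 3 by simp
  qed
qed

lemma mixed_gram_pos_orthogonal:
  assumes H: "block_hermitian H" "griffiths_pos H"
    and u1: "\<exists>a<3. u1 a \<noteq> 0" and u2: "\<exists>a<3. u2 a \<noteq> 0"
    and orth: "sesq (H 0 0) u2 u1 = 0"
  shows "0 < Re (mixed_gram (H 0 0) (H 1 1) u1 u2 - mixed_gram (H 0 1) (H 1 0) u1 u2)"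
proof -
  note m1 = griffiths_pos_gram[OF H u1] and m2 = griffiths_pos_gram[OF H u2]
  have "sesq (H 0 0) u1 u2 = cnj (sesq (H 0 0) u2 u1)"
    by (rule sesq_conj_transpose) (rule block_hermitianD[OF H(1)], simp_all)
  then have orth': "sesq (H 0 0) u1 u2 = 0" using orth by simp
  have H10: "sesq (H 1 0) x y = cnj (sesq (H 0 1) y x)" for x y
    by (rule sesq_conj_transpose) (rule block_hermitianD[OF H(1)], simp_all)
  define C1 C2 C12 C21 where "C1 = sesq (H 0 1) u1 u1" and "C2 = sesq (H 0 1) u2 u2"
    and "C12 = sesq (H 0 1) u1 u2" and "C21 = sesq (H 0 1) u2 u1"
  have sq: "0 \<le> Re (z * cnj z)" for z
    unfolding complex_norm_square[symmetric] by simp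
  have "Re (mixed_gram (H 0 0) (H 1 1) u1 u2 - mixed_gram (H 0 1) (H 1 0) u1 u2)
      = Re (sesq (H 0 0) u1 u1) * Re (sesq (H 1 1) u2 u2)
        + Re (sesq (H 0 0) u2 u2) * Re (sesq (H 1 1) u1 u1)
        - 2 * Re (C1 * cnj C2) + Re (C12 * cnj C12) + Re (C21 * cnj C21)"
    unfolding mixed_gram_def H10 orth orth' C1_def C2_def C12_def C21_def using m1(1,2) m2(1,2)
    by (simp add: algebra_simps)
  moreover have "2 * Re (C1 * cnj C2)
      < Re (sesq (H 0 0) u1 u1) * Re (sesq (H 1 1) u2 u2)
        + Re (sesq (H 0 0) u2 u2) * Re (sesq (H 1 1) u1 u1)"
    unfolding C1_def C2_def using m1(4,5) m2(4,5) m1(6) m2(6) by (rule mixed_discriminant_gt)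
  ultimately show ?thesis using sq[of C12] sq[of C21] by linarith
qed

lemma sesq_det_block_pluecker:
  "sesq (det_block H) (pluecker u1 u2) (pluecker u1 u2)
     = mixed_gram (H 0 0) (H 1 1) u1 u2 - mixed_gram (H 0 1) (H 1 0) u1 u2"
  unfolding det_block_def sesq_diff_matrix sesq_mixed_minor_pluecker ..

lemma sesq_det_block_pluecker_pos:
  assumes H: "block_hermitian H" "griffiths_pos H" and nz: "\<exists>j<3. pluecker u1 u2 j \<noteq> 0"
  shows "0 < Re (sesq (det_block H) (pluecker u1 u2) (pluecker u1 u2))"
proof -
  have u1: "\<exists>a<3. u1 a \<noteq> 0" using pluecker_nonzero[OF nz] by blast
  define a1 where "a1 = sesq (H 0 0) u1 u1"
  have "0 < Re a1" using griffiths_pos_gram[OF H u1] unfolding a1_def by simp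
  then have "a1 \<noteq> 0" by auto
  \<comment> \<open>Gram--Schmidt: this makes \<open>u2'\<close> orthogonal to \<open>u1\<close> for \<open>H 0 0\<close> and only rescales the
    Pluecker vector.\<close>
  define u2' where "u2' b = a1 * u2 b - sesq (H 0 0) u2 u1 * u1 b" for b
  have pl: "pluecker u1 u2' = (\<lambda>j. a1 * pluecker u1 u2 j)"
    unfolding u2'_def by (rule pluecker_shear)
  then have "\<exists>j<3. pluecker u1 u2' j \<noteq> 0" using nz \<open>a1 \<noteq> 0\<close> by auto
  then have u2': "\<exists>a<3. u2' a \<noteq> 0" by (rule pluecker_nonzero)
  have "sesq (H 0 0) u2' u1 = 0"
    unfolding u2'_def sesq_linear_left a1_def by simp
  then have "0 < Re (sesq (det_block H) (pluecker u1 u2') (pluecker u1 u2'))"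
    unfolding sesq_det_block_pluecker by (rule mixed_gram_pos_orthogonal[OF H u1 u2'])
  also have "sesq (det_block H) (pluecker u1 u2') (pluecker u1 u2')
      = of_real ((cmod a1)\<^sup>2) * sesq (det_block H) (pluecker u1 u2) (pluecker u1 u2)"
    unfolding pl sesq_scale complex_norm_square ..
  finally show ?thesis by (simp add: zero_less_mult_iff)
qed

lemma det_block_definite:
  assumes H: "block_hermitian H" "griffiths_pos H" and zero: "sesq (det_block H) c c = 0"
  shows "\<forall>j<3. c j = 0"
proof (rule ccontr)
  assume "\<not> (\<forall>j<3. c j = 0)"
  then have c: "\<exists>j<3. c j \<noteq> 0" by auto
  then obtain u1 u2 l where l: "l \<noteq> 0" "\<forall>j<3. pluecker u1 u2 j = l * c j"
    by (rule pluecker_onto)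
  have "sesq (det_block H) (pluecker u1 u2) (pluecker u1 u2) = l * cnj l * sesq (det_block H) c c"
    unfolding sesq_scale[symmetric] using l(2) by (intro sesq_cong) simp_all
  moreover have "\<exists>j<3. pluecker u1 u2 j \<noteq> 0" using c l by auto
  ultimately show False
    using sesq_det_block_pluecker_pos[OF H] zero by fastforce
qed

lemma form22_det_block_Lefschetz:
  assumes "block_hermitian H" "griffiths_pos H"
  shows "form22 (det_block H) \<in> VR 3 2" "Lefschetz 3 2 1 0 (form22 (det_block H))"
    "Lefschetz 3 2 0 1 (form22 (det_block H))"
  using VR_form22[OF hermitian3_det_block] Lefschetz_form22_10 Lefschetz_form22_01
    det_block_definite assms by blast+

section \<open>Deformation to \<open>\<omega>\<^sup>2\<close>\<close>

definition block_diag :: "mat3 \<Rightarrow> block" where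
  "block_diag P = (\<lambda>i j. if i = j then P else (\<lambda>_ _. 0))"

definition block_segment :: "block \<Rightarrow> block \<Rightarrow> real \<Rightarrow> block" where
  "block_segment H0 H1 t = (\<lambda>i j a b. (1 - of_real t) * H0 i j a b + of_real t * H1 i j a b)"

lemma block_hermitian_diag:
  assumes "hermitian3 P"
  shows "block_hermitian (block_diag P)"
proof -
  have "cnj (P b a) = P a b" if "a < 3" "b < 3" for a b
    using assms that unfolding hermitian3_def by metis
  then show ?thesis unfolding block_hermitian_def block_diag_def by simp
qed

lemma griffiths_pos_diag:
  assumes "pos_def3 P"
  shows "griffiths_pos (block_diag P)"
  unfolding griffiths_pos_def
proof (intro allI impI)
  fix \<theta> :: "nat \<Rightarrow> complex" assume "\<theta> 0 \<noteq> 0 \<or> \<theta> 1 \<noteq> 0"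
  then have "0 < (cmod (\<theta> 0))\<^sup>2 + (cmod (\<theta> 1))\<^sup>2"
    by (auto intro: add_pos_nonneg add_nonneg_pos)
  then have "pos_def3 (\<lambda>a b. of_real ((cmod (\<theta> 0))\<^sup>2 + (cmod (\<theta> 1))\<^sup>2) * P a b)"
    by (rule pos_def3_scale[OF assms])
  then show "pos_def3 (\<lambda>a b. \<Sum>i<2. \<Sum>j<2. \<theta> i * cnj (\<theta> j) * block_diag P i j a b)"
    by (simp add: block_diag_def sum_lessThan_2 distrib_right flip: complex_norm_square)
qed

lemma block_hermitian_segment:
  assumes "block_hermitian H0" "block_hermitian H1"
  shows "block_hermitian (block_segment H0 H1 t)"
  unfolding block_hermitian_def block_segment_def
  using block_hermitianD[OF assms(1), symmetric] block_hermitianD[OF assms(2), symmetric] by simp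

lemma griffiths_pos_segment:
  assumes "griffiths_pos H0" "griffiths_pos H1" "0 \<le> t" "t \<le> 1"
  shows "griffiths_pos (block_segment H0 H1 t)"
  unfolding griffiths_pos_def
proof (intro allI impI)
  fix \<theta> :: "nat \<Rightarrow> complex" assume \<theta>: "\<theta> 0 \<noteq> 0 \<or> \<theta> 1 \<noteq> 0"
  have "pos_def3 (\<lambda>a b. (1 - of_real t) * (\<Sum>i<2. \<Sum>j<2. \<theta> i * cnj (\<theta> j) * H0 i j a b)
      + of_real t * (\<Sum>i<2. \<Sum>j<2. \<theta> i * cnj (\<theta> j) * H1 i j a b))"
    using assms \<theta> unfolding griffiths_pos_def by (intro pos_def3_convex) auto
  then show "pos_def3 (\<lambda>a b. \<Sum>i<2. \<Sum>j<2. \<theta> i * cnj (\<theta> j) * block_segment H0 H1 t i j a b)"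
    by (simp add: block_segment_def sum_lessThan_2 algebra_simps)
qed

lemma det_block_diag: "det_block (block_diag P) = mixed_minor P P"
  by (intro ext) (simp add: det_block_def block_diag_def mixed_minor_def)

lemma block_segment_0 [simp]: "block_segment H0 H1 0 = H0"
  and block_segment_1 [simp]: "block_segment H0 H1 1 = H1"
  by (simp_all add: block_segment_def)

lemma continuous_on_det_block_segment:
  "continuous_on A (\<lambda>t. form22 (det_block (block_segment H0 H1 t)) S)"
proof -
  have "continuous_on A (\<lambda>t. block_segment H0 H1 t i j a b)" for i j a b
    unfolding block_segment_def by (intro continuous_intros)
  then have "continuous_on A (\<lambda>t. det_block (block_segment H0 H1 t) j k)" for j k
    unfolding det_block_def mixed_minor_def by (intro continuous_intros)
  then show ?thesis
    unfolding form22_def by (intro continuous_intros) auto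
qed

lemma wpow_form11_2: "wpow (form11 P) 2 = form22 (mixed_minor P P)"
  using wedge_unitf_right[OF form11_in_V] by (simp add: numeral_2_eq_2 wedge_form11)

lemma HodgeRiemann_3_2I:
  fixes \<gamma> :: "real \<Rightarrow> form"
  assumes "\<And>S. continuous_on {0..1} (\<lambda>t. \<gamma> t S)" "\<gamma> 0 = \<Omega>" "\<gamma> 1 = wpow w 2"
    and "\<And>t. t \<in> {0..1} \<Longrightarrow> \<gamma> t \<in> VR 3 2 \<and> Lefschetz 3 2 1 0 (\<gamma> t) \<and> Lefschetz 3 2 0 1 (\<gamma> t)"
  shows "HodgeRiemann 3 2 w \<Omega>"
  unfolding HodgeRiemann_def
proof (intro conjI allI impI)
  show "\<Omega> \<in> VR 3 2" using assms(4)[of 0] assms(2) by simp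
  fix p q :: nat assume "p + q + 2 = 3"
  \<comment> \<open>In degree (2,2) on \<open>\<complex>\<^sup>3\<close> only \<open>r = 0\<close> occurs, and then the condition is plain Lefschetz.\<close>
  then have pq: "p = 1 \<and> q = 0 \<or> p = 0 \<and> q = 1" and r: "\<And>r. r \<le> min p q \<Longrightarrow> r = 0" by auto
  have unit: "wedge (\<gamma> t) (wpow w 0) = \<gamma> t" if "t \<in> {0..1}" for t
    using assms(4)[OF that] wedge_unitf_right by (auto simp: VR_def)
  show "\<exists>\<gamma> :: real \<Rightarrow> form. (\<forall>S. continuous_on {0..1} (\<lambda>t. \<gamma> t S)) \<and> \<gamma> 0 = \<Omega> \<and> \<gamma> 1 = wpow w 2 \<and>
      (\<forall>t\<in>{0..1}. \<gamma> t \<in> VR 3 2 \<and>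
        (\<forall>r \<le> min p q. Lefschetz 3 (2 + 2*r) (p - r) (q - r) (wedge (\<gamma> t) (wpow w (2*r)))))"
  proof (intro exI[of _ \<gamma>] conjI ballI allI impI)
    fix t :: real and r :: nat assume t: "t \<in> {0..1}" and "r \<le> min p q"
    then have "r = 0" using r by blast
    moreover have "Lefschetz 3 2 p q (\<gamma> t)"
      using pq assms(4)[OF t] by (elim disjE conjE) simp_all
    ultimately show "Lefschetz 3 (2 + 2*r) (p - r) (q - r) (wedge (\<gamma> t) (wpow w (2*r)))"
      using unit[OF t] by simp
  qed (simp_all add: assms(1-3) assms(4)[THEN conjunct1])
qed

theorem mainTheorem8:
  fixes M :: "nat \<Rightarrow> nat \<Rightarrow> form"
  assumes "GriffithsPos 3 M"
  shows "Lefschetz 3 2 1 0 (det2 M) \<and> (\<forall>w. Kahler 3 w \<longrightarrow> HodgeRiemann 3 2 w (det2 M))"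
proof -
  define H where "H = (\<lambda>i j. coeff11 (M i j))"
  have \<Omega>: "det2 M = form22 (det_block H)" and H: "block_hermitian H" "griffiths_pos H"
    using GriffithsPos_coeffs[OF assms] unfolding H_def by blast+
  have "HodgeRiemann 3 2 w (det2 M)" if "Kahler 3 w" for w
  proof -
    obtain P where w: "w = form11 P" and P: "hermitian3 P" "pos_def3 P"
      using \<open>Kahler 3 w\<close> by (rule Kahler3_form11)
    let ?\<gamma> = "\<lambda>t. form22 (det_block (block_segment H (block_diag P) t))"
    show ?thesis
    proof (rule HodgeRiemann_3_2I[of ?\<gamma>])
      show "?\<gamma> 1 = wpow w 2" by (simp add: w det_block_diag wpow_form11_2)
      fix t :: real assume "t \<in> {0..1}"
      then have "block_hermitian (block_segment H (block_diag P) t)"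
        "griffiths_pos (block_segment H (block_diag P) t)"
        using H P by (auto intro: block_hermitian_segment block_hermitian_diag
            griffiths_pos_segment griffiths_pos_diag)
      then show "?\<gamma> t \<in> VR 3 2 \<and> Lefschetz 3 2 1 0 (?\<gamma> t) \<and> Lefschetz 3 2 0 1 (?\<gamma> t)"
        using form22_det_block_Lefschetz by blast
    qed (simp_all add: \<Omega> continuous_on_det_block_segment)
  qed
  then show ?thesis using form22_det_block_Lefschetz(2)[OF H] \<Omega> by simp
qed

end
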